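(* Consider the networked SEIRS model with travel flows, under the standing assumptions (A1) for every $j\in[n]$, $\sum_{i\neq j}F_{ji}=\sum_{i\neq j}F_{ij}$, and (A2) $\alpha_i,\beta_i,\sigma_i,\delta_i>0$ and initial states in $[0,1]$ with $s_i+e_i+x_i+r_i=1$. Let $$U=\begin{bmatrix}-\Sigma-\Gamma+\Phi & B\\ \Sigma & -D-\Gamma+\Phi\end{bmatrix}\in\mathbb R^{2n\times 2n}.$$ If $s(U)>0$, then the healthy state $(s,e,x,r)=(\mathbf 1,\mathbf 0,\mathbf 0,\mathbf 0)$ is unstable (for the dynamics on the invariant set where $s_i+e_i+x_i+r_i=1$ for all $i$, i.e. for the $(e,x,r)$ dynamics obtained by substituting $s=\mathbf 1-e-x-r$).
   Context: Model: $n$ sub-populations with sizes $N_i>0$; $F_{ij}\ge 0$ is the flow of individuals from $j$ to $i$ ($F_{ii}=0$); $\gamma_j=\sum_{i\ne j}F_{ij}/N_j$; $w_{ij}=F_{ij}/\sum_{l\neq j}F_{lj}$, $w_{ii}=0$. Dynamics in vector form: $\dot s=Ar-(BX+\Gamma)s+\Phi s$, $\dot e=BXs-(\Sigma+\Gamma)e+\Phi e$, $\dot x=\Sigma e-(D+\Gamma)x+\Phi x$, $\dot r=Dx-(A+\Gamma)r+\Phi r$, where $A=\mathrm{diag}(\alpha_i)$, $B=\mathrm{diag}(\beta_i)$, $\Sigma=\mathrm{diag}(\sigma_i)$, $D=\mathrm{diag}(\delta_i)$, $X=\mathrm{diag}(x_i)$, $\Gamma=\mathrm{diag}(\gamma_i)$,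 and $\Phi=N^{-1}W\Gamma N$ with $N=\mathrm{diag}(N_i)$, $W=(w_{ij})$. For a real square matrix $M$, $s(M)$ is the largest real part of its eigenvalues. *)

theory Defs
  imports "HOL-Analysis.Analysis" "Jordan_Normal_Form.Spectral_Radius"
begin

text \<open>Sub-populations are indexed by 0..n-1. F i j is the flow from j to i, N i the size.\<close>

definition spectral_abscissa :: "real mat \<Rightarrow> real" where
  "spectral_abscissa M = Max (Re ` spectrum (map_mat complex_of_real M))"

definition gam :: "nat \<Rightarrow> (nat \<Rightarrow> nat \<Rightarrow> real) \<Rightarrow> (nat \<Rightarrow> real) \<Rightarrow> nat \<Rightarrow> real" where
  "gam n F N j = (\<Sum>i\<in>{..<n} - {j}. F i j) / N j"

definition wgt :: "nat \<Rightarrow> (nat \<Rightarrow> nat \<Rightarrow> real) \<Rightarrow> nat \<Rightarrow> nat \<Rightarrow> real" where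
  "wgt n F i j = (if i = j then 0 else F i j / (\<Sum>l\<in>{..<n} - {j}. F l j))"

text \<open>Entries of Phi = N^{-1} W Gamma N.\<close>
definition Phi :: "nat \<Rightarrow> (nat \<Rightarrow> nat \<Rightarrow> real) \<Rightarrow> (nat \<Rightarrow> real) \<Rightarrow> nat \<Rightarrow> nat \<Rightarrow> real" where
  "Phi n F N i j = (1 / N i) * wgt n F i j * gam n F N j * N j"

definition Umat :: "nat \<Rightarrow> (nat \<Rightarrow> nat \<Rightarrow> real) \<Rightarrow> (nat \<Rightarrow> real) \<Rightarrow> (nat \<Rightarrow> real)
    \<Rightarrow> (nat \<Rightarrow> real) \<Rightarrow> (nat \<Rightarrow> real) \<Rightarrow> real mat" where
  "Umat n F N \<beta> \<sigma> \<delta> = mat (2*n) (2*n) (\<lambda>(i, j).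
     if i < n \<and> j < n then (if i = j then - \<sigma> i - gam n F N i else 0) + Phi n F N i j
     else if i < n \<and> n \<le> j then (if j - n = i then \<beta> i else 0)
     else if n \<le> i \<and> j < n then (if i - n = j then \<sigma> j else 0)
     else (if i = j then - \<delta> (i - n) - gam n F N (i - n) else 0) + Phi n F N (i - n) (j - n))"

text \<open>Right-hand sides of the reduced (e,x,r) dynamics, obtained from the SEIRS
  model by substituting s = 1 - e - x - r.  State components are functions nat => real
  (only indices < n matter).\<close>
definition rhs_e where
  "rhs_e n F N \<beta> \<sigma> (e::nat\<Rightarrow>real) (x::nat\<Rightarrow>real) (r::nat\<Rightarrow>real) i =
     \<beta> i * x i * (1 - e i - x i - r i) - (\<sigma> i + gam n F N i) * e i
     + (\<Sum>j<n. Phi n F N i j * e j)"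

definition rhs_x where
  "rhs_x n F N \<sigma> \<delta> (e::nat\<Rightarrow>real) (x::nat\<Rightarrow>real) i =
     \<sigma> i * e i - (\<delta> i + gam n F N i) * x i + (\<Sum>j<n. Phi n F N i j * x j)"

definition rhs_r where
  "rhs_r n F N \<alpha> \<delta> (x::nat\<Rightarrow>real) (r::nat\<Rightarrow>real) i =
     \<delta> i * x i - (\<alpha> i + gam n F N i) * r i + (\<Sum>j<n. Phi n F N i j * r j)"

definition is_solution where
  "is_solution n F N \<alpha> \<beta> \<sigma> \<delta> T (e::nat\<Rightarrow>real\<Rightarrow>real) x r \<longleftrightarrow>
     (\<forall>i<n. \<forall>t\<in>{0..T}.
        (e i has_real_derivative rhs_e n F N \<beta> \<sigma> (\<lambda>k. e k t) (\<lambda>k. x k t) (\<lambda>k. r k t) i) (at t within {0..T}) \<and>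
        (x i has_real_derivative rhs_x n F N \<sigma> \<delta> (\<lambda>k. e k t) (\<lambda>k. x k t) i) (at t within {0..T}) \<and>
        (r i has_real_derivative rhs_r n F N \<alpha> \<delta> (\<lambda>k. x k t) (\<lambda>k. r k t) i) (at t within {0..T}))"

definition state_norm where
  "state_norm n (e::nat\<Rightarrow>real) x r = sqrt (\<Sum>i<n. (e i)\<^sup>2 + (x i)\<^sup>2 + (r i)\<^sup>2)"

text \<open>Admissible initial state (assumption A2): all of s,e,x,r in [0,1] with s = 1-e-x-r.\<close>
definition admissible where
  "admissible n (e::nat\<Rightarrow>real) x r \<longleftrightarrow>
     (\<forall>i<n. 0 \<le> e i \<and> 0 \<le> x i \<and> 0 \<le> r i \<and> e i + x i + r i \<le> 1)"

text \<open>Lyapunov instability of the healthy state: negation of Lyapunov stability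
  (there is eps > 0 such that arbitrarily close admissible initial states have a
  solution leaving the eps-ball).\<close>
definition healthy_unstable where
  "healthy_unstable n F N \<alpha> \<beta> \<sigma> \<delta> \<longleftrightarrow>
     (\<exists>\<epsilon>>0. \<forall>d>0. \<exists>e0 x0 r0. admissible n e0 x0 r0 \<and> state_norm n e0 x0 r0 < d \<and>
        (\<exists>T\<ge>0. \<exists>e x r. is_solution n F N \<alpha> \<beta> \<sigma> \<delta> T e x r \<and>
            (\<forall>i<n. e i 0 = e0 i \<and> x i 0 = x0 i \<and> r i 0 = r0 i) \<and>
            state_norm n (\<lambda>i. e i T) (\<lambda>i. x i T) (\<lambda>i. r i T) \<ge> \<epsilon>))"

end

theory Submission
  imports Defs
begin

(* U is a Metzler matrix, so a left eigenvector for the eigenvalue of largest real part yields,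
   after taking moduli, a nonnegative u with u U >= mu u, mu = s(U) > 0.  Near the healthy state the
   (e, x) part of the reduced dynamics is U plus a quadratic loss, so on a small box in the
   nonnegative orthant the weighted sum W = u . (e, x) grows at rate at least mu / 4.  Starting
   arbitrarily close to 0 along u, W grows linearly until the state reaches distance b from 0.
   Solutions are obtained by Picard iteration for a clipped, globally Lipschitz field, stay
   nonnegative, and solve the true system up to the first time they reach distance b. *)

section \<open>Picard iteration\<close>

lemma integral_lipschitz_bound:
  fixes g :: "real \<Rightarrow> real"
  assumes g: "continuous_on {0..} g" and K: "\<And>s. 0 \<le> s \<Longrightarrow> \<bar>g s\<bar> \<le> K"
    and "0 \<le> t" "0 \<le> t'"
  shows "\<bar>integral {0..t} g - integral {0..t'} g\<bar> \<le> K * \<bar>t - t'\<bar>"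
proof -
  have ordered: "\<bar>integral {0..b} g - integral {0..a} g\<bar> \<le> K * (b - a)"
    if "0 \<le> a" "a \<le> b" for a b
  proof -
    have "g integrable_on {0..b}" "g integrable_on {a..b}"
      using that by (auto intro!: integrable_continuous_real continuous_on_subset[OF g])
    then have "integral {0..b} g - integral {0..a} g = integral {a..b} g"
      using Henstock_Kurzweil_Integration.integral_combine[of 0 a b g] that by simp
    moreover have "norm (integral {a..b} g) \<le> K * (b - a)"
      using has_integral_bound_real[of K "{}" g "integral {a..b} g" a b] K that
        \<open>g integrable_on {a..b}\<close> order_trans[OF abs_ge_zero K[of 0]]
      by (auto simp: integrable_integral)
    ultimately show ?thesis by simp
  qed
  show ?thesis
    using ordered[of t' t] ordered[of t t'] assms(3,4) by (cases "t' \<le> t") (auto simp: abs_minus_commute)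
qed

lemma has_integral_power_over_fact:
  fixes C :: real
  assumes "0 \<le> t"
  shows "((\<lambda>s. C * s ^ k / fact k) has_integral C * t ^ Suc k / fact (Suc k)) {0..t}"
proof -
  have "((\<lambda>s. C * s ^ Suc k / fact (Suc k)) has_real_derivative C * s ^ k / fact k) (at s within {0..t})"
    for s :: real
  proof -
    have "((\<lambda>s. C * s ^ Suc k / fact (Suc k)) has_real_derivative
           C * (real (Suc k) * s ^ k) / fact (Suc k)) (at s within {0..t})"
      by (intro derivative_eq_intros) auto
    moreover have "C * (real (Suc k) * s ^ k) / fact (Suc k) = C * s ^ k / fact k"
      by (simp add: fact_Suc[of k] field_simps del: of_nat_Suc fact_Suc)
    ultimately show ?thesis by simp
  qed
  from fundamental_theorem_of_calculus[OF assms, of "\<lambda>s. C * s ^ Suc k / fact (Suc k)"] this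
  show ?thesis by (simp add: has_real_derivative_iff_has_vector_derivative)
qed

locale bounded_lipschitz_field =
  fixes m :: nat and G :: "(nat \<Rightarrow> real) \<Rightarrow> nat \<Rightarrow> real" and L K :: real
  assumes L_nonneg: "0 \<le> L" and K_nonneg: "0 \<le> K"
    and lipschitz: "\<And>v w i. i < m \<Longrightarrow> \<bar>G v i - G w i\<bar> \<le> L * (\<Sum>j<m. \<bar>v j - w j\<bar>)"
    and bounded: "\<And>v i. i < m \<Longrightarrow> \<bar>G v i\<bar> \<le> K"
begin

lemma continuous_on_field_along:
  assumes q: "\<And>j t t'. j < m \<Longrightarrow> t \<in> S \<Longrightarrow> t' \<in> S \<Longrightarrow> \<bar>q j t - q j t'\<bar> \<le> K * \<bar>t - t'\<bar>"
    and i: "i < m"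
  shows "continuous_on S (\<lambda>s. G (\<lambda>j. q j s) i)"
proof (rule lipschitz_on_continuous_on[of "L * (m * K)"], rule lipschitz_onI)
  fix t t' assume "t \<in> S" "t' \<in> S"
  have "\<bar>G (\<lambda>j. q j t) i - G (\<lambda>j. q j t') i\<bar> \<le> L * (\<Sum>j<m. \<bar>q j t - q j t'\<bar>)"
    using lipschitz[OF i] .
  also have "\<dots> \<le> L * (\<Sum>j<m. K * \<bar>t - t'\<bar>)"
    using q \<open>t \<in> S\<close> \<open>t' \<in> S\<close> by (intro mult_left_mono[OF sum_mono L_nonneg]) auto
  finally show "dist (G (\<lambda>j. q j t) i) (G (\<lambda>j. q j t') i) \<le> L * (m * K) * dist t t'"
    by (simp add: dist_real_def)
qed (use L_nonneg K_nonneg in simp)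

primrec picard :: "(nat \<Rightarrow> real) \<Rightarrow> nat \<Rightarrow> nat \<Rightarrow> real \<Rightarrow> real" where
  "picard z0 0 i t = z0 i"
| "picard z0 (Suc k) i t = z0 i + integral {0..t} (\<lambda>s. G (\<lambda>j. picard z0 k j s) i)"

lemma picard_lipschitz:
  assumes "j < m" "0 \<le> t" "0 \<le> t'"
  shows "\<bar>picard z0 k j t - picard z0 k j t'\<bar> \<le> K * \<bar>t - t'\<bar>"
  using assms
proof (induction k arbitrary: j t t')
  case 0
  then show ?case using K_nonneg by simp
next
  case (Suc k)
  have "continuous_on {0..} (\<lambda>s. G (\<lambda>j. picard z0 k j s) j)"
    using Suc by (intro continuous_on_field_along) auto
  from integral_lipschitz_bound[OF this bounded[OF Suc.prems(1)] Suc.prems(2,3)]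
  show ?case by simp
qed

lemma picard_integrable:
  assumes "i < m" "0 \<le> t"
  shows "(\<lambda>s. G (\<lambda>j. picard z0 k j s) i) integrable_on {0..t}"
  using assms
  by (intro integrable_continuous_real continuous_on_field_along picard_lipschitz) auto

lemma picard_step_bound:
  assumes "i < m" "0 \<le> t"
  shows "\<bar>picard z0 (Suc k) i t - picard z0 k i t\<bar> \<le> K * (L * m) ^ k * t ^ Suc k / fact (Suc k)"
  using assms
proof (induction k arbitrary: i t)
  case 0
  then show ?case
    using bounded[OF \<open>i < m\<close>, of z0] by (simp add: abs_mult) (metis mult.commute mult_right_mono)
next
  case (Suc k)
  let ?d = "\<lambda>s. G (\<lambda>j. picard z0 (Suc k) j s) i - G (\<lambda>j. picard z0 k j s) i"
  let ?B = "\<lambda>s. K * (L * m) ^ Suc k * s ^ Suc k / fact (Suc k)"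
  have "picard z0 (Suc (Suc k)) i t - picard z0 (Suc k) i t = integral {0..t} ?d"
    unfolding picard.simps(2)[of z0 "Suc k" i t] picard.simps(2)[of z0 k i t]
    using integral_diff[OF picard_integrable[OF Suc.prems] picard_integrable[OF Suc.prems]]
    by (simp del: picard.simps)
  also have "norm \<dots> \<le> integral {0..t} ?B"
  proof (rule integral_norm_bound_integral)
    show "?d integrable_on {0..t}"
      using Suc.prems by (intro integrable_diff picard_integrable)
    show "?B integrable_on {0..t}"
      using has_integral_power_over_fact[OF \<open>0 \<le> t\<close>] by blast
    fix s assume s: "s \<in> {0..t}"
    have "\<bar>?d s\<bar> \<le> L * (\<Sum>j<m. \<bar>picard z0 (Suc k) j s - picard z0 k j s\<bar>)"
      using lipschitz[OF Suc.prems(1)] .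
    also have "\<dots> \<le> L * (\<Sum>j<m. K * (L * m) ^ k * s ^ Suc k / fact (Suc k))"
      using Suc.IH s by (intro mult_left_mono[OF sum_mono L_nonneg]) auto
    also have "\<dots> = ?B s" by simp
    finally show "norm (?d s) \<le> ?B s" by simp
  qed
  also have "\<dots> = K * (L * m) ^ Suc k * t ^ Suc (Suc k) / fact (Suc (Suc k))"
    using has_integral_power_over_fact[OF \<open>0 \<le> t\<close>] by (rule integral_unique)
  finally show ?case by simp
qed

definition picard_limit :: "(nat \<Rightarrow> real) \<Rightarrow> nat \<Rightarrow> real \<Rightarrow> real" where
  "picard_limit z0 i t = lim (\<lambda>k. picard z0 k i t)"

lemma picard_converges:
  assumes "i < m" "0 \<le> t"
  shows "(\<lambda>k. picard z0 k i t) \<longlonglongrightarrow> picard_limit z0 i t"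
proof -
  let ?p = "\<lambda>k. picard z0 k i t"
  have bound: "norm (?p (Suc k) - ?p k) \<le> K * t * (inverse (fact k) * (L * m * t) ^ k)" for k
  proof -
    have "\<bar>?p (Suc k) - ?p k\<bar> \<le> K * (L * m) ^ k * t ^ Suc k / fact (Suc k)"
      using picard_step_bound[OF assms] .
    also have "\<dots> \<le> K * (L * m) ^ k * t ^ Suc k / fact k"
      using K_nonneg L_nonneg assms(2) by (intro divide_left_mono) (auto intro: fact_mono)
    also have "\<dots> = K * t * (inverse (fact k) * (L * m * t) ^ k)"
      by (simp add: field_simps power_mult_distrib)
    finally show ?thesis by simp
  qed
  have "summable (\<lambda>k. K * t * (inverse (fact k) * (L * m * t) ^ k))"
    by (intro summable_mult summable_exp)
  then have "summable (\<lambda>k. ?p (Suc k) - ?p k)"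
    using bound by (rule summable_comparison_test')
  then have "convergent (\<lambda>k. ?p k - ?p 0)"
    by (simp only: summable_iff_convergent sum_lessThan_telescope[of "\<lambda>k. ?p k"])
  then have "convergent ?p"
    by (simp only: convergent_diff_const_right_iff)
  then show ?thesis by (simp add: picard_limit_def convergent_LIMSEQ_iff)
qed

lemma picard_limit_lipschitz:
  assumes "j < m" "0 \<le> t" "0 \<le> t'"
  shows "\<bar>picard_limit z0 j t - picard_limit z0 j t'\<bar> \<le> K * \<bar>t - t'\<bar>"
proof (rule LIMSEQ_le_const2)
  show "(\<lambda>k. \<bar>picard z0 k j t - picard z0 k j t'\<bar>) \<longlonglongrightarrow> \<bar>picard_limit z0 j t - picard_limit z0 j t'\<bar>"
    using assms by (intro tendsto_rabs tendsto_diff picard_converges)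
qed (use picard_lipschitz assms in auto)

lemma picard_limit_integral_eq:
  assumes "i < m" "0 \<le> t"
  shows "picard_limit z0 i t = z0 i + integral {0..t} (\<lambda>s. G (\<lambda>j. picard_limit z0 j s) i)"
proof -
  have "(\<lambda>k. integral {0..t} (\<lambda>s. G (\<lambda>j. picard z0 k j s) i))
          \<longlonglongrightarrow> integral {0..t} (\<lambda>s. G (\<lambda>j. picard_limit z0 j s) i)"
  proof (rule dominated_convergence(2))
    show "(\<lambda>s. G (\<lambda>j. picard z0 k j s) i) integrable_on {0..t}" for k
      using picard_integrable assms .
    show "norm (G (\<lambda>j. picard z0 k j s) i) \<le> K" for k s
      using bounded[OF assms(1)] by simp
    fix s assume s: "s \<in> {0..t}"
    have "(\<lambda>k. G (\<lambda>j. picard z0 k j s) i - G (\<lambda>j. picard_limit z0 j s) i) \<longlonglongrightarrow> 0"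
    proof (rule Lim_null_comparison)
      show "\<forall>\<^sub>F k in sequentially. norm (G (\<lambda>j. picard z0 k j s) i - G (\<lambda>j. picard_limit z0 j s) i)
              \<le> L * (\<Sum>j<m. \<bar>picard z0 k j s - picard_limit z0 j s\<bar>)"
        using lipschitz[OF assms(1)] by simp
      have "(\<lambda>k. L * (\<Sum>j<m. \<bar>picard z0 k j s - picard_limit z0 j s\<bar>))
              \<longlonglongrightarrow> L * (\<Sum>j<m. \<bar>picard_limit z0 j s - picard_limit z0 j s\<bar>)"
        using s by (intro tendsto_mult tendsto_const tendsto_sum tendsto_rabs tendsto_diff picard_converges) auto
      then show "(\<lambda>k. L * (\<Sum>j<m. \<bar>picard z0 k j s - picard_limit z0 j s\<bar>)) \<longlonglongrightarrow> 0"
        by simp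
    qed
    then show "(\<lambda>k. G (\<lambda>j. picard z0 k j s) i) \<longlonglongrightarrow> G (\<lambda>j. picard_limit z0 j s) i"
      by (rule LIM_zero_cancel)
  qed (rule integrable_const_ivl)
  then have "(\<lambda>k. picard z0 (Suc k) i t) \<longlonglongrightarrow> z0 i + integral {0..t} (\<lambda>s. G (\<lambda>j. picard_limit z0 j s) i)"
    by (simp add: tendsto_add_const_iff)
  moreover have "(\<lambda>k. picard z0 (Suc k) i t) \<longlonglongrightarrow> picard_limit z0 i t"
    using picard_converges[OF assms] by (rule LIMSEQ_Suc)
  ultimately show ?thesis using LIMSEQ_unique by blast
qed

theorem picard_limit_solves:
  assumes "i < m"
  shows "picard_limit z0 i 0 = z0 i"
    and "t \<in> {0..T} \<Longrightarrow>
      (picard_limit z0 i has_real_derivative G (\<lambda>j. picard_limit z0 j t) i) (at t within {0..T})"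
proof -
  show "picard_limit z0 i 0 = z0 i"
    using picard_limit_integral_eq[OF assms] by simp
  assume t: "t \<in> {0..T}"
  have "continuous_on {0..T} (\<lambda>s. G (\<lambda>j. picard_limit z0 j s) i)"
    using assms by (intro continuous_on_field_along picard_limit_lipschitz) auto
  then have "((\<lambda>t. z0 i + integral {0..t} (\<lambda>s. G (\<lambda>j. picard_limit z0 j s) i))
          has_real_derivative G (\<lambda>j. picard_limit z0 j t) i) (at t within {0..T})"
    using integral_has_real_derivative t by (intro derivative_eq_intros) auto
  then show "(picard_limit z0 i has_real_derivative G (\<lambda>j. picard_limit z0 j t) i) (at t within {0..T})"
    by (rule has_field_derivative_transform_within[of _ _ _ _ 1])
      (use t picard_limit_integral_eq[OF assms] in auto)
qed

end

section \<open>Scalar differential inequalities\<close>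

lemma mono_if_derivative_nonneg_Icc:
  fixes f f' :: "real \<Rightarrow> real"
  assumes "a \<le> b"
    and deriv: "\<And>t. t \<in> {a..b} \<Longrightarrow> (f has_real_derivative f' t) (at t within {a..b})"
    and nonneg: "\<And>t. t \<in> {a<..<b} \<Longrightarrow> 0 \<le> f' t"
  shows "f a \<le> f b"
proof (rule DERIV_nonneg_imp_increasing_open[OF \<open>a \<le> b\<close>])
  show "continuous_on {a..b} f"
    using deriv by (rule DERIV_continuous_on)
  fix t assume "a < t" "t < b"
  then have "(f has_real_derivative f' t) (at t)"
    using deriv[of t] by (simp add: at_within_Icc_at)
  then show "\<exists>y. (f has_real_derivative y) (at t) \<and> 0 \<le> y"
    using nonneg \<open>a < t\<close> \<open>t < b\<close> by auto
qed

lemma DERIV_square_min_zero: "((\<lambda>x::real. (min x 0)\<^sup>2) has_real_derivative 2 * min x 0) (at x)"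
proof (cases "x = 0")
  case True
  have "((\<lambda>y::real. ((min y 0)\<^sup>2 - (min 0 0)\<^sup>2) / (y - 0)) \<longlongrightarrow> 0) (at 0)"
  proof (rule Lim_null_comparison)
    have "norm (((min y 0)\<^sup>2 - (min 0 0)\<^sup>2) / (y - 0)) \<le> \<bar>y\<bar>" for y :: real
      by (cases "y < 0") (simp_all add: power2_eq_square)
    then show "\<forall>\<^sub>F y in at 0. norm (((min y 0)\<^sup>2 - (min 0 0)\<^sup>2) / (y - 0)) \<le> \<bar>y\<bar>"
      by (simp add: always_eventually)
    show "((\<lambda>y::real. \<bar>y\<bar>) \<longlongrightarrow> 0) (at 0)"
      using tendsto_rabs_zero[OF tendsto_ident_at[of "0::real" UNIV]] by simp
  qed
  then show ?thesis using True by (simp add: has_field_derivative_iff)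
next
  case False
  then consider "x < 0" | "0 < x" by linarith
  then show ?thesis
  proof cases
    case 1
    have "((\<lambda>x::real. x\<^sup>2) has_real_derivative 2 * min x 0) (at x)"
      using 1 by (auto intro!: derivative_eq_intros)
    then show ?thesis
      by (rule has_field_derivative_transform_within_open[of _ _ _ "{..<0}"]) (use 1 in auto)
  next
    case 2
    have "((\<lambda>x::real. 0) has_real_derivative 2 * min x 0) (at x)" using 2 by simp
    then show ?thesis
      by (rule has_field_derivative_transform_within_open[of _ _ _ "{0<..}"]) (use 2 in auto)
  qed
qed

lemma ode_solution_nonneg:
  fixes z :: "nat \<Rightarrow> real \<Rightarrow> real" and G :: "(nat \<Rightarrow> real) \<Rightarrow> nat \<Rightarrow> real"
  assumes sol: "\<And>j t. j < m \<Longrightarrow> t \<in> {0..T} \<Longrightarrow>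
      (z j has_real_derivative G (\<lambda>i. z i t) j) (at t within {0..T})"
    and init: "\<And>j. j < m \<Longrightarrow> 0 \<le> z j 0"
    and inward: "\<And>v j. j < m \<Longrightarrow> v j < 0 \<Longrightarrow> 0 \<le> G v j"
    and j: "j < m" and t: "t \<in> {0..T}"
  shows "0 \<le> z j t"
proof -
  define \<phi> where "\<phi> s = (\<Sum>i<m. (min (z i s) 0)\<^sup>2)" for s
  have "\<phi> t \<le> \<phi> 0"
  proof -
    have "- \<phi> 0 \<le> - \<phi> t"
    proof (rule mono_if_derivative_nonneg_Icc[where f = "\<lambda>s. - \<phi> s"])
      fix s assume s: "s \<in> {0..t}"
      have "((\<lambda>s. (min (z i s) 0)\<^sup>2) has_real_derivative 2 * min (z i s) 0 * G (\<lambda>k. z k s) i)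
          (at s within {0..t})" if "i < m" for i
      proof -
        have "(z i has_real_derivative G (\<lambda>k. z k s) i) (at s within {0..t})"
          by (rule has_field_derivative_subset[OF sol[OF that]]) (use s t in auto)
        from DERIV_chain'[OF this DERIV_square_min_zero] show ?thesis by simp
      qed
      then show "((\<lambda>s. - \<phi> s) has_real_derivative
          - (\<Sum>i<m. 2 * min (z i s) 0 * G (\<lambda>k. z k s) i)) (at s within {0..t})"
        unfolding \<phi>_def by (intro DERIV_minus DERIV_sum) auto
    next
      fix s
      have "(\<Sum>i<m. 2 * min (z i s) 0 * G (\<lambda>k. z k s) i) \<le> 0"
      proof (rule sum_nonpos)
        fix i assume "i \<in> {..<m}"
        then show "2 * min (z i s) 0 * G (\<lambda>k. z k s) i \<le> 0"
          using inward[of i "\<lambda>k. z k s"] by (cases "z i s < 0") (auto simp: mult_nonpos_nonneg)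
      qed
      then show "0 \<le> - (\<Sum>i<m. 2 * min (z i s) 0 * G (\<lambda>k. z k s) i)"
        by simp
    qed (use t in auto)
    then show ?thesis by simp
  qed
  also have "\<phi> 0 = 0"
    using init by (simp add: \<phi>_def)
  finally have "\<phi> t \<le> 0" .
  moreover have "(min (z j t) 0)\<^sup>2 \<le> \<phi> t"
    unfolding \<phi>_def using j by (intro member_le_sum) auto
  ultimately have "(min (z j t) 0)\<^sup>2 \<le> 0" by linarith
  then show ?thesis by (simp add: min_def split: if_splits)
qed

lemma linear_growth_of_nonneg_supersolution:
  fixes W W' :: "real \<Rightarrow> real"
  assumes "0 \<le> \<kappa>" "0 \<le> T"
    and deriv: "\<And>t. t \<in> {0..T} \<Longrightarrow> (W has_real_derivative W' t) (at t within {0..T})"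
    and rate: "\<And>t. t \<in> {0..T} \<Longrightarrow> \<kappa> * W t \<le> W' t"
    and nonneg: "\<And>t. t \<in> {0..T} \<Longrightarrow> 0 \<le> W t"
  shows "W 0 + \<kappa> * W 0 * T \<le> W T"
proof -
  have above_initial: "W 0 \<le> W t" if t: "t \<in> {0..T}" for t
  proof (rule mono_if_derivative_nonneg_Icc[where f = W])
    show "(W has_real_derivative W' s) (at s within {0..t})" if "s \<in> {0..t}" for s
      by (rule has_field_derivative_subset[OF deriv]) (use that t in auto)
    show "0 \<le> W' s" if "s \<in> {0<..<t}" for s
      using rate[of s] nonneg[of s] \<open>0 \<le> \<kappa>\<close> that t
      by (smt (verit) atLeastAtMost_iff greaterThanLessThan_iff zero_le_mult_iff)
  qed (use t in auto)
  have "W 0 - \<kappa> * W 0 * 0 \<le> W T - \<kappa> * W 0 * T"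
  proof (rule mono_if_derivative_nonneg_Icc[where f = "\<lambda>t. W t - \<kappa> * W 0 * t", OF \<open>0 \<le> T\<close>])
    show "((\<lambda>t. W t - \<kappa> * W 0 * t) has_real_derivative W' t - \<kappa> * W 0) (at t within {0..T})"
      if "t \<in> {0..T}" for t
      using deriv[OF that] by (auto intro!: derivative_eq_intros)
    show "0 \<le> W' t - \<kappa> * W 0" if "t \<in> {0<..<T}" for t
      using rate[of t] above_initial[of t] mult_left_mono[OF above_initial[of t] \<open>0 \<le> \<kappa>\<close>] that
      by auto
  qed
  then show ?thesis by simp
qed

lemma first_hitting_time:
  fixes f :: "real \<Rightarrow> real"
  assumes f: "continuous_on {0..T} f" and "f 0 < c" and hit: "t1 \<in> {0..T}" "c \<le> f t1"
  obtains \<tau> where "\<tau> \<in> {0..T}" "c \<le> f \<tau>" "\<And>t. t \<in> {0..\<tau>} \<Longrightarrow> f t \<le> c"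
proof -
  define S where "S = {t \<in> {0..T}. c \<le> f t}"
  have "closed S"
    using continuous_closed_preimage[OF f, of "{c..}"] by (simp add: S_def vimage_def Int_def)
  moreover have "S \<noteq> {}" "bdd_below S"
    using hit by (auto simp: S_def intro: bdd_belowI[of _ 0])
  ultimately have "Inf S \<in> S" by (rule closed_contains_Inf[rotated 2])
  then have Inf: "Inf S \<in> {0..T}" "c \<le> f (Inf S)" by (auto simp: S_def)
  have before: "f t < c" if "0 \<le> t" "t < Inf S" for t
    using cInf_lower[of t S] \<open>bdd_below S\<close> that Inf(1) by (force simp: S_def)
  have "0 < Inf S"
    using Inf \<open>f 0 < c\<close> by (cases "Inf S = 0") auto
  have "f t \<le> c" if "t \<in> {0..Inf S}" for t
  proof (rule continuous_le_on_closure[where S = "{0..<Inf S}" and f = f and x = t])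
    show "continuous_on (closure {0..<Inf S}) f"
      using \<open>0 < Inf S\<close> Inf(1) by (intro continuous_on_subset[OF f]) auto
    show "t \<in> closure {0..<Inf S}"
      using \<open>0 < Inf S\<close> that by simp
    show "f s \<le> c" if "s \<in> {0..<Inf S}" for s
      using before[of s] that by auto
  qed
  with Inf show ?thesis using that by blast
qed

section \<open>Metzler matrices\<close>

lemma metzler_left_eigenvector_abs:
  fixes a :: "nat \<Rightarrow> nat \<Rightarrow> real" and w :: "nat \<Rightarrow> complex"
  assumes metzler: "\<forall>i<k. \<forall>j<k. i \<noteq> j \<longrightarrow> 0 \<le> a j i"
    and eigen: "\<forall>i<k. (\<Sum>j<k. of_real (a j i) * w j) = \<nu> * w i"
    and i: "i < k"
  shows "Re \<nu> * cmod (w i) \<le> (\<Sum>j<k. a j i * cmod (w j))"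
proof -
  define c where "c = \<bar>a i i\<bar>"
  define b where "b j = a j i + (if j = i then c else 0)" for j
  have b_nonneg: "0 \<le> b j" if "j < k" for j
    using metzler i that by (cases "j = i") (auto simp: b_def c_def)
  have "(\<Sum>j<k. of_real (b j) * w j) = (\<Sum>j<k. of_real (a j i) * w j) + of_real c * w i"
    using i by (simp add: b_def distrib_right sum.distrib if_distrib[of "\<lambda>x. of_real x * _"] cong: if_cong)
  also have "\<dots> = (\<nu> + of_real c) * w i"
    using eigen i by (simp add: distrib_right)
  finally have shifted: "(\<Sum>j<k. of_real (b j) * w j) = (\<nu> + of_real c) * w i" .
  have "(Re \<nu> + c) * cmod (w i) \<le> cmod (\<nu> + of_real c) * cmod (w i)"
    using abs_Re_le_cmod[of "\<nu> + of_real c"] by (intro mult_right_mono) auto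
  also have "\<dots> = cmod (\<Sum>j<k. of_real (b j) * w j)"
    by (simp add: shifted norm_mult)
  also have "\<dots> \<le> (\<Sum>j<k. b j * cmod (w j))"
    using norm_sum[of "\<lambda>j. of_real (b j) * w j" "{..<k}"] b_nonneg by (simp add: norm_mult)
  also have "\<dots> = (\<Sum>j<k. a j i * cmod (w j)) + c * cmod (w i)"
    using i by (simp add: b_def distrib_right sum.distrib if_distrib[of "\<lambda>x. x * _"] cong: if_cong)
  finally show ?thesis by (simp add: algebra_simps)
qed

lemma metzler_left_subeigenvector:
  fixes A :: "real mat"
  assumes A: "A \<in> carrier_mat k k" and "0 < k"
    and metzler: "\<forall>i<k. \<forall>j<k. i \<noteq> j \<longrightarrow> 0 \<le> A $$ (i, j)"
    and abscissa: "0 < spectral_abscissa A"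
  obtains u \<mu> where "0 < \<mu>" "\<forall>i<k. 0 \<le> u i \<and> u i \<le> 1" "\<exists>i<k. 0 < u i"
    "\<forall>i<k. \<mu> * u i \<le> (\<Sum>j<k. A $$ (j, i) * u j)"
proof -
  define C where "C = map_mat complex_of_real A"
  have C: "C \<in> carrier_mat k k" using A by (simp add: C_def)
  have "spectral_abscissa A \<in> Re ` spectrum C"
    unfolding spectral_abscissa_def C_def[symmetric]
    using card_finite_spectrum(1)[OF C] spectrum_non_empty[OF C \<open>0 < k\<close>] by (intro Max_in) auto
  then obtain \<nu> where \<nu>: "\<nu> \<in> spectrum C" and Re_\<nu>: "Re \<nu> = spectral_abscissa A" by auto
  have CT: "transpose_mat C \<in> carrier_mat k k" using C by simp
  have "eigenvalue (transpose_mat C) \<nu>"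
    using \<nu> unfolding spectrum_def eigenvalue_root_char_poly[OF CT] char_poly_transpose_mat[OF C]
      eigenvalue_root_char_poly[OF C, symmetric] by simp
  then obtain w where "eigenvector (transpose_mat C) w \<nu>" unfolding eigenvalue_def by blast
  then have w: "w \<in> carrier_vec k" "w \<noteq> 0\<^sub>v k" "transpose_mat C *\<^sub>v w = \<nu> \<cdot>\<^sub>v w"
    unfolding eigenvector_def using CT by auto
  have eigen: "\<forall>i<k. (\<Sum>j<k. of_real (A $$ (j, i)) * w $ j) = \<nu> * w $ i"
  proof (intro allI impI)
    fix i assume i: "i < k"
    have "(transpose_mat C *\<^sub>v w) $ i = (\<nu> \<cdot>\<^sub>v w) $ i" using w(3) by simp
    then show "(\<Sum>j<k. of_real (A $$ (j, i)) * w $ j) = \<nu> * w $ i"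
      using i C A w(1) by (simp add: scalar_prod_def C_def lessThan_atLeast0)
  qed
  obtain i0 where i0: "i0 < k" "w $ i0 \<noteq> 0"
    using w(1,2) by (metis carrier_vecD eq_vecI index_zero_vec(1,2))
  define S where "S = (\<Sum>j<k. cmod (w $ j))"
  have le_S: "cmod (w $ i) \<le> S" if "i < k" for i
    unfolding S_def using that by (intro member_le_sum) auto
  then have "0 < S" using i0 by (meson norm_le_zero_iff not_le order.strict_trans2)
  define u where "u j = cmod (w $ j) / S" for j
  show thesis
  proof (rule that[of "Re \<nu>" u])
    show "0 < Re \<nu>" using Re_\<nu> abscissa by simp
    show "\<forall>i<k. 0 \<le> u i \<and> u i \<le> 1" using le_S \<open>0 < S\<close> by (simp add: u_def)
    show "\<exists>i<k. 0 < u i" using i0 \<open>0 < S\<close> by (auto simp: u_def)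
    show "\<forall>i<k. Re \<nu> * u i \<le> (\<Sum>j<k. A $$ (j, i) * u j)"
      using metzler_left_eigenvector_abs[of k "\<lambda>j i. A $$ (j, i)" "\<lambda>j. w $ j" \<nu>] metzler eigen \<open>0 < S\<close>
      by (auto simp: u_def sum_divide_distrib[symmetric] divide_right_mono)
  qed
qed

lemma left_subeigenvector_weighted_sum_ge:
  fixes a :: "nat \<Rightarrow> nat \<Rightarrow> real"
  assumes sub: "\<forall>i<m. \<mu> * u i \<le> (\<Sum>j<m. a j i * u j)" and v: "\<forall>j<m. 0 \<le> v j"
  shows "\<mu> * (\<Sum>k<m. u k * v k) \<le> (\<Sum>k<m. u k * (\<Sum>j<m. a k j * v j))"
proof -
  have "(\<Sum>k<m. u k * (\<Sum>j<m. a k j * v j)) = (\<Sum>j<m. v j * (\<Sum>k<m. a k j * u k))"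
    unfolding sum_distrib_left by (subst sum.swap) (simp add: algebra_simps)
  moreover have "(\<Sum>j<m. v j * (\<mu> * u j)) \<le> (\<Sum>j<m. v j * (\<Sum>k<m. a k j * u k))"
    using sub v by (intro sum_mono mult_left_mono) auto
  ultimately show ?thesis by (simp add: sum_distrib_left algebra_simps)
qed

lemma metzler_row_ge_partial_sum:
  fixes a :: "nat \<Rightarrow> nat \<Rightarrow> real"
  assumes metzler: "\<forall>j<m. j \<noteq> k \<longrightarrow> 0 \<le> a k j" and c: "0 \<le> a k k + c"
    and v: "\<forall>j<m. 0 \<le> v j" and "k < m" and J: "J \<subseteq> {..<m} - {k}"
  shows "(\<Sum>j\<in>J. a k j * v j) \<le> (\<Sum>j<m. a k j * v j) + c * v k"
proof -
  define b where "b j = (a k j + (if j = k then c else 0)) * v j" for j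
  have "(\<Sum>j\<in>J. a k j * v j) = (\<Sum>j\<in>J. b j)"
    using J by (intro sum.cong) (auto simp: b_def)
  also have "\<dots> \<le> (\<Sum>j<m. b j)"
    using J metzler c v by (intro sum_mono2) (auto simp: b_def)
  also have "(\<Sum>j<m. b j) = (\<Sum>j<m. a k j * v j + (if j = k then c * v j else 0))"
    by (intro sum.cong refl) (simp add: b_def distrib_right)
  also have "\<dots> = (\<Sum>j<m. a k j * v j) + c * v k"
    using \<open>k < m\<close> by (simp add: sum.distrib)
  finally show ?thesis .
qed

section \<open>The reduced SEIRS dynamics\<close>

lemma sum_lessThan_twice:
  fixes n :: nat
  shows "(\<Sum>j<2 * n. f j) = (\<Sum>j<n. f j) + (\<Sum>j<n. f (n + j))"
proof -
  have split: "{..<2 * n} = {..<n} \<union> {n..<n + n}" by auto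
  have "(\<Sum>j<2 * n. f j) = (\<Sum>j<n. f j) + (\<Sum>j\<in>{n..<n + n}. f j)"
    unfolding split by (rule sum.union_disjoint) auto
  also have "(\<Sum>j\<in>{n..<n + n}. f j) = (\<Sum>j<n. f (n + j))"
    by (subst sum.shift_bounds_nat_ivl[of f 0 n n, simplified]) (simp add: lessThan_atLeast0 add.commute)
  finally show ?thesis .
qed

definition clip :: "real \<Rightarrow> (nat \<Rightarrow> real) \<Rightarrow> nat \<Rightarrow> real" where
  "clip b v j = max 0 (min b (v j))"

lemma clip_dist_le: "\<bar>clip b v j - clip b w j\<bar> \<le> \<bar>v j - w j\<bar>"
  unfolding clip_def by (auto simp: max_def min_def abs_if)

lemma clip_bounds: "0 \<le> b \<Longrightarrow> 0 \<le> clip b v j \<and> clip b v j \<le> b"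
  unfolding clip_def by simp

lemma clip_eq_self: "0 \<le> v j \<Longrightarrow> v j \<le> b \<Longrightarrow> clip b v j = v j"
  unfolding clip_def by simp

lemma abs_diff_mult_one_minus_le:
  fixes x x' s s' :: real
  assumes "0 \<le> x" "x \<le> 1" "0 \<le> x'" "x' \<le> 1" "0 \<le> s" "s \<le> 1" "0 \<le> s'" "s' \<le> 1"
  shows "\<bar>x * (1 - s) - x' * (1 - s')\<bar> \<le> \<bar>x - x'\<bar> + \<bar>s - s'\<bar>"
proof -
  have "x * (1 - s) - x' * (1 - s') = (x - x') * (1 - s) + x' * (s' - s)"
    by (simp add: algebra_simps)
  then have "\<bar>x * (1 - s) - x' * (1 - s')\<bar> \<le> \<bar>(x - x') * (1 - s)\<bar> + \<bar>x' * (s' - s)\<bar>"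
    by (simp only: abs_triangle_ineq)
  moreover have "\<bar>(x - x') * (1 - s)\<bar> \<le> \<bar>x - x'\<bar>"
    using assms by (simp add: abs_mult mult_left_le)
  moreover have "\<bar>x' * (s' - s)\<bar> \<le> \<bar>s - s'\<bar>"
    using assms by (simp add: abs_mult abs_minus_commute mult_left_le_one_le)
  ultimately show ?thesis by linarith
qed

lemma abs_weighted_sum_le:
  fixes a p :: "nat \<Rightarrow> real"
  assumes "\<forall>j<m. 0 \<le> a j" "\<forall>j<m. \<bar>p j\<bar> \<le> D"
  shows "\<bar>\<Sum>j<m. a j * p j\<bar> \<le> (\<Sum>j<m. a j) * D"
proof -
  have "\<bar>\<Sum>j<m. a j * p j\<bar> \<le> (\<Sum>j<m. \<bar>a j * p j\<bar>)" by (rule sum_abs)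
  also have "\<dots> \<le> (\<Sum>j<m. a j * D)"
    using assms by (intro sum_mono) (simp add: abs_mult mult_left_mono)
  finally show ?thesis by (simp add: sum_distrib_right)
qed

locale seirs =
  fixes n :: nat and F :: "nat \<Rightarrow> nat \<Rightarrow> real" and N \<alpha> \<beta> \<sigma> \<delta> :: "nat \<Rightarrow> real"
  assumes n_pos: "0 < n"
    and N_pos: "\<forall>i<n. 0 < N i"
    and F_nonneg: "\<forall>i<n. \<forall>j<n. 0 \<le> F i j"
    and rates_pos: "\<forall>i<n. 0 < \<alpha> i \<and> 0 < \<beta> i \<and> 0 < \<sigma> i \<and> 0 < \<delta> i"
begin

abbreviation "U \<equiv> Umat n F N \<beta> \<sigma> \<delta>"

lemma gam_nonneg: "i < n \<Longrightarrow> 0 \<le> gam n F N i"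
  unfolding gam_def using N_pos F_nonneg by (intro divide_nonneg_pos sum_nonneg) auto

lemma Phi_nonneg: "i < n \<Longrightarrow> j < n \<Longrightarrow> 0 \<le> Phi n F N i j"
  unfolding Phi_def wgt_def using N_pos F_nonneg gam_nonneg[of j]
  by (auto intro!: mult_nonneg_nonneg divide_nonneg_nonneg sum_nonneg)

lemma Umat_carrier: "U \<in> carrier_mat (2 * n) (2 * n)"
  by (simp add: Umat_def)

lemma Umat_ee: "i < n \<Longrightarrow> j < n \<Longrightarrow>
    U $$ (i, j) = (if i = j then - \<sigma> i - gam n F N i else 0) + Phi n F N i j"
  and Umat_ex: "i < n \<Longrightarrow> j < n \<Longrightarrow> U $$ (i, n + j) = (if j = i then \<beta> i else 0)"
  and Umat_xe: "i < n \<Longrightarrow> j < n \<Longrightarrow> U $$ (n + i, j) = (if i = j then \<sigma> j else 0)"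
  and Umat_xx: "i < n \<Longrightarrow> j < n \<Longrightarrow>
    U $$ (n + i, n + j) = (if i = j then - \<delta> i - gam n F N i else 0) + Phi n F N i j"
  by (simp_all add: Umat_def)

lemma Umat_offdiag_nonneg: "\<forall>i<2 * n. \<forall>j<2 * n. i \<noteq> j \<longrightarrow> 0 \<le> U $$ (i, j)"
proof (intro allI impI)
  fix i j assume ij: "i < 2 * n" "j < 2 * n" "i \<noteq> j"
  have upper: "k = n + (k - n)" "k - n < n" if "k < 2 * n" "\<not> k < n" for k
    using that by auto
  show "0 \<le> U $$ (i, j)"
  proof (cases "i < n"; cases "j < n")
    assume "i < n" "j < n"
    then show ?thesis using ij Umat_ee Phi_nonneg by simp
  next
    assume "i < n" "\<not> j < n"
    then show ?thesis
      using Umat_ex[of i "j - n"] upper[OF ij(2)] rates_pos by (simp add: less_imp_le)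
  next
    assume "\<not> i < n" "j < n"
    then show ?thesis
      using Umat_xe[of "i - n" j] upper[OF ij(1)] rates_pos by (simp add: less_imp_le)
  next
    assume "\<not> i < n" "\<not> j < n"
    moreover from this have "i - n \<noteq> j - n" using ij(3) by arith
    ultimately show ?thesis
      using Umat_xx[of "i - n" "j - n"] upper[OF ij(1)] upper[OF ij(2)] Phi_nonneg by simp
  qed
qed

lemma Umat_row_e:
  assumes i: "i < n"
  shows "(\<Sum>j<2 * n. U $$ (i, j) * v j)
    = (- \<sigma> i - gam n F N i) * v i + (\<Sum>j<n. Phi n F N i j * v j) + \<beta> i * v (n + i)"
proof -
  have "(\<Sum>j<n. U $$ (i, j) * v j)
      = (\<Sum>j<n. (if i = j then (- \<sigma> i - gam n F N i) * v j else 0) + Phi n F N i j * v j)"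
    by (intro sum.cong refl) (simp add: Umat_ee i distrib_right)
  also have "\<dots> = (- \<sigma> i - gam n F N i) * v i + (\<Sum>j<n. Phi n F N i j * v j)"
    using i by (simp add: sum.distrib)
  finally have ee: "(\<Sum>j<n. U $$ (i, j) * v j) = \<dots>" .
  have "(\<Sum>j<n. U $$ (i, n + j) * v (n + j)) = (\<Sum>j<n. if j = i then \<beta> i * v (n + j) else 0)"
    by (intro sum.cong refl) (simp add: Umat_ex i)
  also have "\<dots> = \<beta> i * v (n + i)" using i by simp
  finally show ?thesis using ee by (simp add: sum_lessThan_twice)
qed

lemma Umat_row_x:
  assumes i: "i < n"
  shows "(\<Sum>j<2 * n. U $$ (n + i, j) * v j)
    = \<sigma> i * v i + (- \<delta> i - gam n F N i) * v (n + i) + (\<Sum>j<n. Phi n F N i j * v (n + j))"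
proof -
  have "(\<Sum>j<n. U $$ (n + i, j) * v j) = (\<Sum>j<n. if j = i then \<sigma> i * v j else 0)"
    by (intro sum.cong refl) (auto simp: Umat_xe i)
  also have "\<dots> = \<sigma> i * v i" using i by simp
  finally have xe: "(\<Sum>j<n. U $$ (n + i, j) * v j) = \<sigma> i * v i" .
  have "(\<Sum>j<n. U $$ (n + i, n + j) * v (n + j))
      = (\<Sum>j<n. (if i = j then (- \<delta> i - gam n F N i) * v (n + j) else 0) + Phi n F N i j * v (n + j))"
    by (intro sum.cong refl) (simp add: Umat_xx i distrib_right)
  also have "\<dots> = (- \<delta> i - gam n F N i) * v (n + i) + (\<Sum>j<n. Phi n F N i j * v (n + j))"
    using i by (simp add: sum.distrib)
  finally show ?thesis using xe by (simp add: sum_lessThan_twice)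
qed

definition stacked_rhs :: "(nat \<Rightarrow> real) \<Rightarrow> nat \<Rightarrow> real" where
  "stacked_rhs v k =
    (if k < n then rhs_e n F N \<beta> \<sigma> (\<lambda>i. v i) (\<lambda>i. v (n + i)) (\<lambda>i. v (2 * n + i)) k
     else if k < 2 * n then rhs_x n F N \<sigma> \<delta> (\<lambda>i. v i) (\<lambda>i. v (n + i)) (k - n)
     else if k < 3 * n then rhs_r n F N \<alpha> \<delta> (\<lambda>i. v (n + i)) (\<lambda>i. v (2 * n + i)) (k - 2 * n)
     else 0)"

definition stacked_norm :: "(nat \<Rightarrow> real) \<Rightarrow> real" where
  "stacked_norm v = state_norm n (\<lambda>i. v i) (\<lambda>i. v (n + i)) (\<lambda>i. v (2 * n + i))"

lemma stacked_rhs_e: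
    "k < n \<Longrightarrow> stacked_rhs v k = rhs_e n F N \<beta> \<sigma> (\<lambda>i. v i) (\<lambda>i. v (n + i)) (\<lambda>i. v (2 * n + i)) k"
  and stacked_rhs_x:
    "k < n \<Longrightarrow> stacked_rhs v (n + k) = rhs_x n F N \<sigma> \<delta> (\<lambda>i. v i) (\<lambda>i. v (n + i)) k"
  and stacked_rhs_r:
    "k < n \<Longrightarrow> stacked_rhs v (2 * n + k) = rhs_r n F N \<alpha> \<delta> (\<lambda>i. v (n + i)) (\<lambda>i. v (2 * n + i)) k"
  by (simp_all add: stacked_rhs_def)

lemma stacked_rhs_cong: "\<forall>j<3 * n. v j = w j \<Longrightarrow> stacked_rhs v k = stacked_rhs w k"
  by (auto simp: stacked_rhs_def rhs_e_def rhs_x_def rhs_r_def intro!: sum.cong)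

lemma stacked_norm_cong: "\<forall>j<3 * n. v j = w j \<Longrightarrow> stacked_norm v = stacked_norm w"
  unfolding stacked_norm_def state_norm_def by (intro arg_cong[where f = sqrt] sum.cong) auto

lemma weighted_stacked_rhs_eq:
  "(\<Sum>k<2 * n. u k * stacked_rhs v k)
     = (\<Sum>k<2 * n. u k * (\<Sum>j<2 * n. U $$ (k, j) * v j))
       - (\<Sum>i<n. u i * \<beta> i * v (n + i) * (v i + v (n + i) + v (2 * n + i)))"
proof -
  have e: "u k * stacked_rhs v k = u k * (\<Sum>j<2 * n. U $$ (k, j) * v j)
      - u k * \<beta> k * v (n + k) * (v k + v (n + k) + v (2 * n + k))" if "k < n" for k
    unfolding stacked_rhs_e[OF that] Umat_row_e[OF that] rhs_e_def by (simp add: algebra_simps)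
  have x: "u (n + k) * stacked_rhs v (n + k) = u (n + k) * (\<Sum>j<2 * n. U $$ (n + k, j) * v j)"
    if "k < n" for k
    unfolding stacked_rhs_x[OF that] Umat_row_x[OF that] rhs_x_def by (simp add: algebra_simps)
  have "(\<Sum>k<2 * n. u k * stacked_rhs v k)
      = (\<Sum>k<n. u k * stacked_rhs v k) + (\<Sum>k<n. u (n + k) * stacked_rhs v (n + k))"
    by (rule sum_lessThan_twice)
  also have "\<dots> = (\<Sum>k<n. u k * (\<Sum>j<2 * n. U $$ (k, j) * v j)
          - u k * \<beta> k * v (n + k) * (v k + v (n + k) + v (2 * n + k)))
      + (\<Sum>k<n. u (n + k) * (\<Sum>j<2 * n. U $$ (n + k, j) * v j))"
    using e x by (intro arg_cong2[where f = "(+)"] sum.cong) auto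
  also have "\<dots> = (\<Sum>k<2 * n. u k * (\<Sum>j<2 * n. U $$ (k, j) * v j))
       - (\<Sum>i<n. u i * \<beta> i * v (n + i) * (v i + v (n + i) + v (2 * n + i)))"
    unfolding sum_lessThan_twice[of "\<lambda>k. u k * (\<Sum>j<2 * n. U $$ (k, j) * v j)"]
    by (simp add: sum_subtractf)
  finally show ?thesis .
qed

lemma incidence_le_Umat_row:
  assumes c: "\<forall>i<2 * n. 0 \<le> U $$ (i, i) + c" and v: "\<forall>j<2 * n. 0 \<le> v j" and k: "k < 2 * n"
  shows "(if k < n then \<beta> k * v (n + k) else 0) \<le> (\<Sum>j<2 * n. U $$ (k, j) * v j) + c * v k"
proof -
  have "(\<Sum>j\<in>J. U $$ (k, j) * v j) \<le> (\<Sum>j<2 * n. U $$ (k, j) * v j) + c * v k"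
    if "J \<subseteq> {..<2 * n} - {k}" for J
    using Umat_offdiag_nonneg c v k that by (intro metzler_row_ge_partial_sum) auto
  from this[of "if k < n then {n + k} else {}"] show ?thesis
    using Umat_ex[of k k] by (cases "k < n") auto
qed

lemma weighted_rhs_growth:
  assumes u: "\<forall>i<2 * n. 0 \<le> u i"
    and sub: "\<forall>i<2 * n. \<mu> * u i \<le> (\<Sum>j<2 * n. U $$ (j, i) * u j)"
    and c: "\<forall>i<2 * n. 0 \<le> U $$ (i, i) + c"
    and \<eta>: "0 \<le> \<eta>" "\<eta> \<le> 1/2" "\<eta> * c \<le> \<mu> / 4" and "0 < \<mu>"
    and v: "\<forall>j<3 * n. 0 \<le> v j"
    and small: "\<forall>i<n. v i + v (n + i) + v (2 * n + i) \<le> \<eta>"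
  shows "\<mu> / 4 * (\<Sum>k<2 * n. u k * v k) \<le> (\<Sum>k<2 * n. u k * stacked_rhs v k)"
proof -
  define A where "A = (\<Sum>k<2 * n. u k * (\<Sum>j<2 * n. U $$ (k, j) * v j))"
  define W where "W = (\<Sum>k<2 * n. u k * v k)"
  define P where "P = (\<Sum>i<n. u i * \<beta> i * v (n + i))"
  define Q where "Q = (\<Sum>i<n. u i * \<beta> i * v (n + i) * (v i + v (n + i) + v (2 * n + i)))"
  have v2: "\<forall>j<2 * n. 0 \<le> v j" using v by auto
  have "0 \<le> W" unfolding W_def using u v2 by (auto intro!: sum_nonneg)
  have A_ge: "\<mu> * W \<le> A"
    unfolding A_def W_def using sub v2 by (rule left_subeigenvector_weighted_sum_ge)
  have P_le: "P \<le> A + c * W"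
  proof -
    have "P = (\<Sum>k<2 * n. u k * (if k < n then \<beta> k * v (n + k) else 0))"
      unfolding P_def sum_lessThan_twice[of "\<lambda>k. u k * (if k < n then \<beta> k * v (n + k) else 0)"]
      by (simp add: algebra_simps)
    also have "\<dots> \<le> (\<Sum>k<2 * n. u k * ((\<Sum>j<2 * n. U $$ (k, j) * v j) + c * v k))"
      using u incidence_le_Umat_row[OF c v2] by (intro sum_mono mult_left_mono) auto
    also have "\<dots> = A + c * W"
      unfolding A_def W_def by (simp add: sum.distrib sum_distrib_left algebra_simps)
    finally show ?thesis .
  qed
  have Q_le: "Q \<le> \<eta> * P"
  proof -
    have "Q \<le> (\<Sum>i<n. u i * \<beta> i * v (n + i) * \<eta>)"
      unfolding Q_def
    proof (intro sum_mono mult_left_mono)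
      fix i assume i: "i \<in> {..<n}"
      show "v i + v (n + i) + v (2 * n + i) \<le> \<eta>" using small i by auto
      show "0 \<le> u i * \<beta> i * v (n + i)" using u v rates_pos i by (simp add: less_imp_le)
    qed
    then show ?thesis unfolding P_def by (simp add: sum_distrib_left algebra_simps)
  qed
  have "(\<Sum>k<2 * n. u k * stacked_rhs v k) = A - Q"
    unfolding A_def Q_def by (rule weighted_stacked_rhs_eq)
  moreover have "\<eta> * P \<le> \<eta> * (A + c * W)" using P_le \<eta>(1) by (rule mult_left_mono)
  moreover have "(1 - \<eta>) * (\<mu> * W) \<le> (1 - \<eta>) * A" using A_ge \<eta>(2) by (intro mult_left_mono) auto
  moreover have "\<eta> * c * W \<le> \<mu> / 4 * W" using \<eta>(3) \<open>0 \<le> W\<close> by (rule mult_right_mono)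
  moreover have "\<eta> * (\<mu> * W) \<le> 1/2 * (\<mu> * W)" using \<eta>(2) \<open>0 < \<mu>\<close> \<open>0 \<le> W\<close> by (intro mult_right_mono) auto
  ultimately show ?thesis using Q_le unfolding W_def[symmetric] by (simp add: algebra_simps)
qed

lemma weighted_rhs_growth_near_zero:
  assumes u: "\<forall>i<2 * n. 0 \<le> u i"
    and sub: "\<forall>i<2 * n. \<mu> * u i \<le> (\<Sum>j<2 * n. U $$ (j, i) * u j)" and "0 < \<mu>"
  obtains b where "0 < b" "b \<le> 1/3"
    "\<And>v. \<forall>j<3 * n. 0 \<le> v j \<and> v j \<le> b \<Longrightarrow>
      \<mu> / 4 * (\<Sum>k<2 * n. u k * v k) \<le> (\<Sum>k<2 * n. u k * stacked_rhs v k)"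
proof -
  define c where "c = (\<Sum>i<2 * n. \<bar>U $$ (i, i)\<bar>)"
  have "0 \<le> c" unfolding c_def by (simp add: sum_nonneg)
  have c_ge: "\<forall>i<2 * n. 0 \<le> U $$ (i, i) + c"
  proof (intro allI impI)
    fix i assume "i < 2 * n"
    then have "\<bar>U $$ (i, i)\<bar> \<le> c" unfolding c_def by (intro member_le_sum) auto
    then show "0 \<le> U $$ (i, i) + c" by linarith
  qed
  define \<eta> where "\<eta> = min (1/2) (\<mu> / (4 * (c + 1)))"
  have "0 < \<eta>" using \<open>0 < \<mu>\<close> \<open>0 \<le> c\<close> by (simp add: \<eta>_def)
  have "\<eta> * c \<le> \<mu> / 4"
  proof -
    have "\<eta> * c \<le> \<mu> / (4 * (c + 1)) * c" using \<open>0 \<le> c\<close> by (intro mult_right_mono) (auto simp: \<eta>_def)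
    also have "\<dots> \<le> \<mu> / 4" using \<open>0 < \<mu>\<close> \<open>0 \<le> c\<close> by (simp add: field_simps)
    finally show ?thesis .
  qed
  show thesis
  proof (rule that[of "\<eta> / 3"])
    show "0 < \<eta> / 3" "\<eta> / 3 \<le> 1/3" using \<open>0 < \<eta>\<close> by (auto simp: \<eta>_def)
    fix v assume v: "\<forall>j<3 * n. 0 \<le> v j \<and> v j \<le> \<eta> / 3"
    show "\<mu> / 4 * (\<Sum>k<2 * n. u k * v k) \<le> (\<Sum>k<2 * n. u k * stacked_rhs v k)"
    proof (rule weighted_rhs_growth[OF u sub c_ge \<open>0 < \<eta>\<close>[THEN less_imp_le] _ \<open>\<eta> * c \<le> \<mu> / 4\<close> \<open>0 < \<mu>\<close>])
      show "\<eta> \<le> 1/2" unfolding \<eta>_def by (rule min.cobounded1)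
      show "\<forall>j<3 * n. 0 \<le> v j" using v by auto
      show "\<forall>i<n. v i + v (n + i) + v (2 * n + i) \<le> \<eta>"
      proof (intro allI impI)
        fix i assume "i < n"
        then have "v i \<le> \<eta> / 3" "v (n + i) \<le> \<eta> / 3" "v (2 * n + i) \<le> \<eta> / 3" using v by auto
        then show "v i + v (n + i) + v (2 * n + i) \<le> \<eta>" by linarith
      qed
    qed
  qed
qed

definition rate_bound :: real where
  "rate_bound = (\<Sum>i<n. \<alpha> i + \<beta> i + \<sigma> i + \<delta> i + gam n F N i + (\<Sum>j<n. Phi n F N i j))"

lemma rates_nonneg:
  assumes "i < n"
  shows "0 \<le> \<alpha> i" "0 \<le> \<beta> i" "0 \<le> \<sigma> i" "0 \<le> \<delta> i" "0 \<le> gam n F N i"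
    "0 \<le> (\<Sum>j<n. Phi n F N i j)"
  using assms rates_pos gam_nonneg Phi_nonneg by (auto simp: less_imp_le intro: sum_nonneg)

lemma rate_bound_ge:
  assumes "i < n"
  shows "\<alpha> i + \<beta> i + \<sigma> i + \<delta> i + gam n F N i + (\<Sum>j<n. Phi n F N i j) \<le> rate_bound"
  unfolding rate_bound_def
proof (rule member_le_sum)
  fix l assume "l \<in> {..<n} - {i}"
  then show "0 \<le> \<alpha> l + \<beta> l + \<sigma> l + \<delta> l + gam n F N l + (\<Sum>j<n. Phi n F N l j)"
    using rates_nonneg[of l] by auto
qed (use assms in auto)

lemma rate_bound_nonneg: "0 \<le> rate_bound"
  using rate_bound_ge[OF n_pos] rates_nonneg[OF n_pos] by linarith

lemma less_3n_cases:
  assumes "k < 3 * n"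
  obtains (e) "k < n" | (x) i where "i < n" "k = n + i" | (r) i where "i < n" "k = 2 * n + i"
proof -
  consider "k < n" | "n \<le> k" "k < 2 * n" | "2 * n \<le> k" by linarith
  then show ?thesis
  proof cases
    case 1 then show ?thesis using that(1) by blast
  next
    case 2 then show ?thesis using that(2)[of "k - n"] by auto
  next
    case 3 then show ?thesis using that(3)[of "k - 2 * n"] assms by auto
  qed
qed

(* A common form of the three compartments, so that the Lipschitz, bound and inwardness
   estimates for the clipped field need no case split. *)

lemma stacked_rhs_shape:
  assumes "k < 3 * n"
  obtains (components) i off a c g where "i < n" "off \<le> 2 * n" "0 \<le> a" "0 \<le> c"
    "a + c + (\<Sum>j<n. Phi n F N i j) \<le> rate_bound"
    "\<And>v. stacked_rhs v k = a * g v - c * v k + (\<Sum>j<n. Phi n F N i j * v (off + j))"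
    "\<And>v. \<forall>j<3 * n. 0 \<le> v j \<and> v j \<le> 1/3 \<Longrightarrow> 0 \<le> g v \<and> g v \<le> 1"
    "\<And>v w D. \<forall>j<3 * n. 0 \<le> v j \<and> v j \<le> 1/3 \<Longrightarrow> \<forall>j<3 * n. 0 \<le> w j \<and> w j \<le> 1/3 \<Longrightarrow>
       \<forall>j<3 * n. \<bar>v j - w j\<bar> \<le> D \<Longrightarrow> \<bar>g v - g w\<bar> \<le> 4 * D"
  using assms
proof (cases rule: less_3n_cases)
  case e
  let ?s = "\<lambda>v. v k + v (n + k) + v (2 * n + k)"
  show ?thesis
  proof (rule that[of k 0 "\<beta> k" "\<sigma> k + gam n F N k" "\<lambda>v. v (n + k) * (1 - ?s v)"])
    show "stacked_rhs v k = \<beta> k * (v (n + k) * (1 - ?s v)) - (\<sigma> k + gam n F N k) * v k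
        + (\<Sum>j<n. Phi n F N k j * v (0 + j))" for v
      unfolding stacked_rhs_e[OF e] rhs_e_def by (simp add: algebra_simps)
    show "0 \<le> v (n + k) * (1 - ?s v) \<and> v (n + k) * (1 - ?s v) \<le> 1"
      if "\<forall>j<3 * n. 0 \<le> v j \<and> v j \<le> 1/3" for v :: "nat \<Rightarrow> real"
      using that[rule_format, of k] that[rule_format, of "n + k"] that[rule_format, of "2 * n + k"] e
      by (auto intro: mult_le_one)
    fix v w :: "nat \<Rightarrow> real" and D
    assume v: "\<forall>j<3 * n. 0 \<le> v j \<and> v j \<le> 1/3" and w: "\<forall>j<3 * n. 0 \<le> w j \<and> w j \<le> 1/3"
      and D: "\<forall>j<3 * n. \<bar>v j - w j\<bar> \<le> D"
    have "\<bar>v (n + k) * (1 - ?s v) - w (n + k) * (1 - ?s w)\<bar> \<le> \<bar>v (n + k) - w (n + k)\<bar> + \<bar>?s v - ?s w\<bar>"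
      using v[rule_format, of k] v[rule_format, of "n + k"] v[rule_format, of "2 * n + k"]
        w[rule_format, of k] w[rule_format, of "n + k"] w[rule_format, of "2 * n + k"] e
      by (intro abs_diff_mult_one_minus_le) auto
    also have "\<dots> \<le> D + (D + D + D)"
      using D[rule_format, of k] D[rule_format, of "n + k"] D[rule_format, of "2 * n + k"] e
      by (intro add_mono) (auto simp: abs_le_iff)
    finally show "\<bar>v (n + k) * (1 - ?s v) - w (n + k) * (1 - ?s w)\<bar> \<le> 4 * D" by simp
  qed (use e rates_nonneg[OF e] rate_bound_ge[OF e] in auto)
next
  case (x i)
  show ?thesis
  proof (rule that[of i n "\<sigma> i" "\<delta> i + gam n F N i" "\<lambda>v. v i"])
    show "stacked_rhs v k = \<sigma> i * v i - (\<delta> i + gam n F N i) * v k + (\<Sum>j<n. Phi n F N i j * v (n + j))"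
      for v
      unfolding x(2) stacked_rhs_x[OF x(1)] rhs_x_def by (simp add: algebra_simps)
    show "0 \<le> v i \<and> v i \<le> 1" if "\<forall>j<3 * n. 0 \<le> v j \<and> v j \<le> 1/3" for v :: "nat \<Rightarrow> real"
      using that[rule_format, of i] x(1) by auto
    show "\<bar>v i - w i\<bar> \<le> 4 * D" if "\<forall>j<3 * n. \<bar>v j - w j\<bar> \<le> D" for v w :: "nat \<Rightarrow> real" and D
      using that[rule_format, of i] x(1) by auto
  qed (use x rates_nonneg[OF x(1)] rate_bound_ge[OF x(1)] in auto)
next
  case (r i)
  show ?thesis
  proof (rule that[of i "2 * n" "\<delta> i" "\<alpha> i + gam n F N i" "\<lambda>v. v (n + i)"])
    show "stacked_rhs v k = \<delta> i * v (n + i) - (\<alpha> i + gam n F N i) * v k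
        + (\<Sum>j<n. Phi n F N i j * v (2 * n + j))" for v
      unfolding r(2) stacked_rhs_r[OF r(1)] rhs_r_def by (simp add: algebra_simps)
    show "0 \<le> v (n + i) \<and> v (n + i) \<le> 1" if "\<forall>j<3 * n. 0 \<le> v j \<and> v j \<le> 1/3"
      for v :: "nat \<Rightarrow> real"
      using that[rule_format, of "n + i"] r(1) by auto
    show "\<bar>v (n + i) - w (n + i)\<bar> \<le> 4 * D" if "\<forall>j<3 * n. \<bar>v j - w j\<bar> \<le> D" for v w :: "nat \<Rightarrow> real" and D
      using that[rule_format, of "n + i"] r(1) by auto
  qed (use r rates_nonneg[OF r(1)] rate_bound_ge[OF r(1)] in auto)
qed

(* Clipping to [0, b] yields a globally Lipschitz, bounded field, so Picard iteration applies;
   it coincides with the model field as long as the solution stays in the box [0, b]. *)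

definition clipped_rhs :: "real \<Rightarrow> (nat \<Rightarrow> real) \<Rightarrow> nat \<Rightarrow> real" where
  "clipped_rhs b v = stacked_rhs (clip b v)"

lemma clip_in_box:
  assumes "0 \<le> b" "b \<le> 1/3"
  shows "\<forall>j<3 * n. 0 \<le> clip b v j \<and> clip b v j \<le> 1/3"
  using clip_bounds[OF assms(1), of v] assms(2) by (blast intro: order_trans)

lemma clipped_rhs_eq_stacked_rhs:
  "\<forall>j<3 * n. 0 \<le> v j \<and> v j \<le> b \<Longrightarrow> clipped_rhs b v k = stacked_rhs v k"
  unfolding clipped_rhs_def by (rule stacked_rhs_cong) (simp add: clip_eq_self)

lemma clipped_rhs_lipschitz:
  assumes b: "0 \<le> b" "b \<le> 1/3" and k: "k < 3 * n"
  shows "\<bar>clipped_rhs b v k - clipped_rhs b w k\<bar> \<le> 4 * rate_bound * (\<Sum>j<3 * n. \<bar>v j - w j\<bar>)"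
using k proof (cases rule: stacked_rhs_shape)
  case (components i off a c g)
  define D where "D = (\<Sum>j<3 * n. \<bar>v j - w j\<bar>)"
  let ?p = "clip b v" and ?q = "clip b w"
  have pq: "\<forall>j<3 * n. \<bar>?p j - ?q j\<bar> \<le> D"
  proof (intro allI impI)
    fix j assume "j < 3 * n"
    then have "\<bar>v j - w j\<bar> \<le> D" unfolding D_def by (intro member_le_sum) auto
    then show "\<bar>?p j - ?q j\<bar> \<le> D" using clip_dist_le[of b v j w] by linarith
  qed
  have "0 \<le> D" unfolding D_def by (simp add: sum_nonneg)
  have "\<bar>a * (g ?p - g ?q)\<bar> \<le> a * (4 * D)"
    using components(8)[OF clip_in_box[OF b] clip_in_box[OF b] pq] \<open>0 \<le> a\<close>
    by (simp add: abs_mult mult_left_mono)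
  moreover have "a * (4 * D) = 4 * (a * D)" by simp
  moreover have "\<bar>c * (?p k - ?q k)\<bar> \<le> c * D"
    using pq k \<open>0 \<le> c\<close> by (simp add: abs_mult mult_left_mono)
  moreover have "\<bar>\<Sum>j<n. Phi n F N i j * (?p (off + j) - ?q (off + j))\<bar> \<le> (\<Sum>j<n. Phi n F N i j) * D"
    using pq components(1,2) Phi_nonneg by (intro abs_weighted_sum_le) auto
  moreover have "clipped_rhs b v k - clipped_rhs b w k = a * (g ?p - g ?q) - c * (?p k - ?q k)
      + (\<Sum>j<n. Phi n F N i j * (?p (off + j) - ?q (off + j)))"
    unfolding clipped_rhs_def components(6) by (simp add: algebra_simps sum_subtractf)
  moreover have "a * D + c * D + (\<Sum>j<n. Phi n F N i j) * D \<le> rate_bound * D"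
    using mult_right_mono[OF components(5) \<open>0 \<le> D\<close>] by (simp add: distrib_right)
  moreover have "0 \<le> c * D" "0 \<le> (\<Sum>j<n. Phi n F N i j) * D"
    using \<open>0 \<le> c\<close> \<open>0 \<le> D\<close> rates_nonneg(6)[OF components(1)] by simp_all
  ultimately show ?thesis unfolding D_def[symmetric] abs_le_iff by linarith
qed

lemma clipped_rhs_bounded:
  assumes b: "0 \<le> b" "b \<le> 1/3" and k: "k < 3 * n"
  shows "\<bar>clipped_rhs b v k\<bar> \<le> rate_bound"
using k proof (cases rule: stacked_rhs_shape)
  case (components i off a c g)
  let ?p = "clip b v"
  have p: "\<forall>j<3 * n. 0 \<le> ?p j \<and> ?p j \<le> 1/3" by (rule clip_in_box[OF b])
  have "\<bar>a * g ?p\<bar> \<le> a"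
    using components(7)[OF p] \<open>0 \<le> a\<close> by (simp add: abs_mult mult_left_le)
  moreover have "\<bar>c * ?p k\<bar> \<le> c"
  proof -
    have "0 \<le> ?p k" "?p k \<le> 1" using p k by auto
    then show ?thesis using \<open>0 \<le> c\<close> by (simp add: abs_mult mult_left_le)
  qed
  moreover have "\<bar>\<Sum>j<n. Phi n F N i j * ?p (off + j)\<bar> \<le> (\<Sum>j<n. Phi n F N i j) * 1"
  proof (intro abs_weighted_sum_le allI impI)
    fix j assume "j < n"
    then show "0 \<le> Phi n F N i j" using components(1) Phi_nonneg by simp
    show "\<bar>?p (off + j)\<bar> \<le> 1" using p[rule_format, of "off + j"] \<open>j < n\<close> components(2) by auto
  qed
  ultimately show ?thesis
    using components(5) unfolding clipped_rhs_def components(6) abs_le_iff by linarith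
qed

lemma clipped_rhs_inward:
  assumes b: "0 \<le> b" "b \<le> 1/3" and k: "k < 3 * n" and "v k < 0"
  shows "0 \<le> clipped_rhs b v k"
using k proof (cases rule: stacked_rhs_shape)
  case (components i off a c g)
  let ?p = "clip b v"
  have p: "\<forall>j<3 * n. 0 \<le> ?p j \<and> ?p j \<le> 1/3" by (rule clip_in_box[OF b])
  have "?p k = 0" using \<open>v k < 0\<close> b by (simp add: clip_def)
  moreover have "0 \<le> (\<Sum>j<n. Phi n F N i j * ?p (off + j))"
    using p components(1,2) Phi_nonneg by (intro sum_nonneg mult_nonneg_nonneg) auto
  ultimately show ?thesis
    using components(7)[OF p] \<open>0 \<le> a\<close> unfolding clipped_rhs_def components(6) by simp
qed

lemma clipped_rhs_bounded_lipschitz: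
  "0 \<le> b \<Longrightarrow> b \<le> 1/3 \<Longrightarrow> bounded_lipschitz_field (3 * n) (clipped_rhs b) (4 * rate_bound) rate_bound"
  by unfold_locales (use rate_bound_nonneg clipped_rhs_lipschitz clipped_rhs_bounded in auto)

lemma clipped_solution_exists:
  assumes b: "0 \<le> b" "b \<le> 1/3" and z0: "\<forall>j<3 * n. 0 \<le> z0 j"
  obtains z where "\<forall>j<3 * n. z j 0 = z0 j"
    "\<And>j t. j < 3 * n \<Longrightarrow> t \<in> {0..T} \<Longrightarrow>
      (z j has_real_derivative clipped_rhs b (\<lambda>i. z i t) j) (at t within {0..T})"
    "\<And>j t. j < 3 * n \<Longrightarrow> t \<in> {0..T} \<Longrightarrow> 0 \<le> z j t"
proof -
  interpret bounded_lipschitz_field "3 * n" "clipped_rhs b" "4 * rate_bound" rate_bound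
    using b by (rule clipped_rhs_bounded_lipschitz)
  have init: "\<forall>j<3 * n. picard_limit z0 j 0 = z0 j"
    using picard_limit_solves(1) by blast
  have deriv: "(picard_limit z0 j has_real_derivative clipped_rhs b (\<lambda>i. picard_limit z0 i t) j)
      (at t within {0..T})" if "j < 3 * n" "t \<in> {0..T}" for j t
    using picard_limit_solves(2)[OF that] .
  have "0 \<le> picard_limit z0 j t" if "j < 3 * n" "t \<in> {0..T}" for j t
    using ode_solution_nonneg[OF deriv _ clipped_rhs_inward[OF b] that] init z0 by auto
  with init deriv show thesis by (rule that)
qed

lemma abs_le_stacked_norm:
  assumes "j < 3 * n"
  shows "\<bar>v j\<bar> \<le> stacked_norm v"
proof -
  have "\<bar>a\<bar> \<le> stacked_norm v" if "i < n" "a\<^sup>2 \<le> (v i)\<^sup>2 + (v (n + i))\<^sup>2 + (v (2 * n + i))\<^sup>2" for i a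
  proof -
    have "a\<^sup>2 \<le> (\<Sum>i<n. (v i)\<^sup>2 + (v (n + i))\<^sup>2 + (v (2 * n + i))\<^sup>2)"
      using that member_le_sum[of i "{..<n}" "\<lambda>i. (v i)\<^sup>2 + (v (n + i))\<^sup>2 + (v (2 * n + i))\<^sup>2"] by auto
    then have "sqrt (a\<^sup>2) \<le> sqrt (\<Sum>i<n. (v i)\<^sup>2 + (v (n + i))\<^sup>2 + (v (2 * n + i))\<^sup>2)"
      by (rule real_sqrt_le_mono)
    then show ?thesis by (simp add: stacked_norm_def state_norm_def)
  qed
  with assms show ?thesis
    by (cases rule: less_3n_cases) auto
qed

lemma stacked_norm_le:
  fixes \<tau> :: real
  assumes "0 \<le> \<tau>" and small: "\<forall>j<3 * n. \<bar>v j\<bar> \<le> \<tau>"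
  shows "stacked_norm v \<le> 3 * real n * \<tau>"
proof -
  have sq: "(v j)\<^sup>2 \<le> \<tau>\<^sup>2" if "j < 3 * n" for j
    using power_mono[OF small[rule_format, OF that] abs_ge_zero, of 2] by simp
  have "(\<Sum>i<n. (v i)\<^sup>2 + (v (n + i))\<^sup>2 + (v (2 * n + i))\<^sup>2) \<le> (\<Sum>i<n. 3 * \<tau>\<^sup>2)"
  proof (rule sum_mono)
    fix i assume "i \<in> {..<n}"
    then have "i < 3 * n" "n + i < 3 * n" "2 * n + i < 3 * n" by auto
    from sq[OF this(1)] sq[OF this(2)] sq[OF this(3)]
    show "(v i)\<^sup>2 + (v (n + i))\<^sup>2 + (v (2 * n + i))\<^sup>2 \<le> 3 * \<tau>\<^sup>2" by linarith
  qed
  also have "\<dots> = 3 * real n * \<tau>\<^sup>2" by simp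
  also have "\<dots> \<le> 3 * real n * (3 * real n) * \<tau>\<^sup>2"
    using n_pos by (intro mult_right_mono mult_left_mono) auto
  also have "\<dots> = (3 * real n * \<tau>)\<^sup>2" by (simp add: power2_eq_square mult_ac)
  finally show ?thesis
    unfolding stacked_norm_def state_norm_def using \<open>0 \<le> \<tau>\<close> by (intro real_le_lsqrt) auto
qed

lemma is_solution_if_clipped_in_box:
  assumes sol: "\<And>j t. j < 3 * n \<Longrightarrow> t \<in> {0..T} \<Longrightarrow>
      (z j has_real_derivative clipped_rhs b (\<lambda>i. z i t) j) (at t within {0..T})"
    and box: "\<And>j t. j < 3 * n \<Longrightarrow> t \<in> {0..T} \<Longrightarrow> 0 \<le> z j t \<and> z j t \<le> b"
  shows "is_solution n F N \<alpha> \<beta> \<sigma> \<delta> T (\<lambda>i. z i) (\<lambda>i. z (n + i)) (\<lambda>i. z (2 * n + i))"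
  unfolding is_solution_def
proof (intro allI impI ballI conjI)
  fix i t assume i: "i < n" and t: "t \<in> {0..T}"
  have deriv: "(z k has_real_derivative stacked_rhs (\<lambda>j. z j t) k) (at t within {0..T})" if "k < 3 * n" for k
    using sol[OF that t] clipped_rhs_eq_stacked_rhs[of "\<lambda>j. z j t" b k] box[OF _ t] by simp
  show "(z i has_real_derivative rhs_e n F N \<beta> \<sigma> (\<lambda>k. z k t) (\<lambda>k. z (n + k) t) (\<lambda>k. z (2 * n + k) t) i)
      (at t within {0..T})"
    using deriv[of i] stacked_rhs_e[OF i, of "\<lambda>j. z j t"] i by simp
  show "(z (n + i) has_real_derivative rhs_x n F N \<sigma> \<delta> (\<lambda>k. z k t) (\<lambda>k. z (n + k) t) i)
      (at t within {0..T})"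
    using deriv[of "n + i"] stacked_rhs_x[OF i, of "\<lambda>j. z j t"] i by simp
  show "(z (2 * n + i) has_real_derivative rhs_r n F N \<alpha> \<delta> (\<lambda>k. z (n + k) t) (\<lambda>k. z (2 * n + k) t) i)
      (at t within {0..T})"
    using deriv[of "2 * n + i"] stacked_rhs_r[OF i, of "\<lambda>j. z j t"] i by simp
qed

lemma clipped_solution_escapes:
  assumes "0 < \<kappa>" "0 \<le> T" and u: "\<forall>i<2 * n. 0 \<le> u i"
    and growth: "\<And>v. \<forall>j<3 * n. 0 \<le> v j \<and> v j \<le> b \<Longrightarrow>
      \<kappa> * (\<Sum>k<2 * n. u k * v k) \<le> (\<Sum>k<2 * n. u k * stacked_rhs v k)"
    and sol: "\<And>j t. j < 3 * n \<Longrightarrow> t \<in> {0..T} \<Longrightarrow>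
      (z j has_real_derivative clipped_rhs b (\<lambda>i. z i t) j) (at t within {0..T})"
    and nonneg: "\<And>j t. j < 3 * n \<Longrightarrow> t \<in> {0..T} \<Longrightarrow> 0 \<le> z j t"
    and long: "(\<Sum>k<2 * n. u k) * b < \<kappa> * (\<Sum>k<2 * n. u k * z k 0) * T"
  shows "\<exists>t\<in>{0..T}. b \<le> stacked_norm (\<lambda>j. z j t)"
proof (rule ccontr)
  assume "\<not> ?thesis"
  then have box: "0 \<le> z j t \<and> z j t \<le> b" if "j < 3 * n" "t \<in> {0..T}" for j t
    using abs_le_stacked_norm[OF that(1), of "\<lambda>j. z j t"] nonneg[OF that] that(2) by force
  define W where "W t = (\<Sum>k<2 * n. u k * z k t)" for t
  have W_nonneg: "0 \<le> W t" if "t \<in> {0..T}" for t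
    unfolding W_def using u box[OF _ that] by (intro sum_nonneg mult_nonneg_nonneg) auto
  have "W 0 + \<kappa> * W 0 * T \<le> W T"
  proof (rule linear_growth_of_nonneg_supersolution[OF less_imp_le[OF \<open>0 < \<kappa>\<close>] \<open>0 \<le> T\<close> _ _ W_nonneg])
    fix t assume t: "t \<in> {0..T}"
    show "(W has_real_derivative (\<Sum>k<2 * n. u k * clipped_rhs b (\<lambda>i. z i t) k)) (at t within {0..T})"
      unfolding W_def using sol t by (intro DERIV_sum DERIV_cmult) auto
    have "(\<Sum>k<2 * n. u k * clipped_rhs b (\<lambda>i. z i t) k) = (\<Sum>k<2 * n. u k * stacked_rhs (\<lambda>i. z i t) k)"
      using box[OF _ t] by (intro sum.cong refl) (simp add: clipped_rhs_eq_stacked_rhs)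
    then show "\<kappa> * W t \<le> (\<Sum>k<2 * n. u k * clipped_rhs b (\<lambda>i. z i t) k)"
      unfolding W_def using growth box[OF _ t] by simp
  qed
  moreover have "W T \<le> (\<Sum>k<2 * n. u k) * b"
    unfolding W_def sum_distrib_right using u box \<open>0 \<le> T\<close>
    by (intro sum_mono mult_left_mono) auto
  moreover have "0 \<le> W 0" using W_nonneg \<open>0 \<le> T\<close> by simp
  ultimately show False using long unfolding W_def by linarith
qed

lemma escaping_solution:
  assumes b: "0 < b" "b \<le> 1/3" and "0 < \<kappa>" and u: "\<forall>i<2 * n. 0 \<le> u i"
    and growth: "\<And>v. \<forall>j<3 * n. 0 \<le> v j \<and> v j \<le> b \<Longrightarrow>
      \<kappa> * (\<Sum>k<2 * n. u k * v k) \<le> (\<Sum>k<2 * n. u k * stacked_rhs v k)"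
    and z0: "\<forall>j<3 * n. 0 \<le> z0 j" and W0: "0 < (\<Sum>k<2 * n. u k * z0 k)" and "stacked_norm z0 < b"
  shows "\<exists>T\<ge>0. \<exists>e x r. is_solution n F N \<alpha> \<beta> \<sigma> \<delta> T e x r \<and>
    (\<forall>i<n. e i 0 = z0 i \<and> x i 0 = z0 (n + i) \<and> r i 0 = z0 (2 * n + i)) \<and>
    b \<le> state_norm n (\<lambda>i. e i T) (\<lambda>i. x i T) (\<lambda>i. r i T)"
proof -
  define T where "T = (\<Sum>k<2 * n. u k) * b / (\<kappa> * (\<Sum>k<2 * n. u k * z0 k)) + 1"
  have "0 \<le> (\<Sum>k<2 * n. u k)" by (rule sum_nonneg) (use u in auto)
  then have "0 \<le> (\<Sum>k<2 * n. u k) * b / (\<kappa> * (\<Sum>k<2 * n. u k * z0 k))"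
    using b \<open>0 < \<kappa>\<close> W0 by (intro divide_nonneg_pos mult_nonneg_nonneg mult_pos_pos) auto
  then have "0 \<le> T" and long: "(\<Sum>k<2 * n. u k) * b < \<kappa> * (\<Sum>k<2 * n. u k * z0 k) * T"
    using \<open>0 < \<kappa>\<close> W0 by (simp_all add: T_def field_simps)
  obtain z where init: "\<forall>j<3 * n. z j 0 = z0 j"
    and sol: "\<And>j t. j < 3 * n \<Longrightarrow> t \<in> {0..T} \<Longrightarrow>
      (z j has_real_derivative clipped_rhs b (\<lambda>i. z i t) j) (at t within {0..T})"
    and nonneg: "\<And>j t. j < 3 * n \<Longrightarrow> t \<in> {0..T} \<Longrightarrow> 0 \<le> z j t"
    using clipped_solution_exists[where T = T, OF less_imp_le[OF b(1)] b(2) z0] by blast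
  have "(\<Sum>k<2 * n. u k * z k 0) = (\<Sum>k<2 * n. u k * z0 k)" using init by simp
  then obtain t1 where t1: "t1 \<in> {0..T}" "b \<le> stacked_norm (\<lambda>j. z j t1)"
    using clipped_solution_escapes[OF \<open>0 < \<kappa>\<close> \<open>0 \<le> T\<close> u growth sol nonneg] long by auto
  have cont: "continuous_on {0..T} (\<lambda>t. stacked_norm (\<lambda>j. z j t))"
    unfolding stacked_norm_def state_norm_def using DERIV_continuous_on[OF sol]
    by (intro continuous_intros) auto
  have start: "stacked_norm (\<lambda>j. z j 0) < b"
    using stacked_norm_cong[of "\<lambda>j. z j 0" z0] init \<open>stacked_norm z0 < b\<close> by simp
  obtain \<tau> where \<tau>: "\<tau> \<in> {0..T}" "b \<le> stacked_norm (\<lambda>j. z j \<tau>)"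
    and below: "\<And>t. t \<in> {0..\<tau>} \<Longrightarrow> stacked_norm (\<lambda>j. z j t) \<le> b"
    using first_hitting_time[OF cont start t1] by blast
  have sol_\<tau>: "(z j has_real_derivative clipped_rhs b (\<lambda>i. z i t) j) (at t within {0..\<tau>})"
    if "j < 3 * n" "t \<in> {0..\<tau>}" for j t
    by (rule has_field_derivative_subset[OF sol]) (use that \<tau>(1) in auto)
  have "0 \<le> z j t \<and> z j t \<le> b" if "j < 3 * n" "t \<in> {0..\<tau>}" for j t
    using nonneg[OF that(1)] abs_le_stacked_norm[OF that(1), of "\<lambda>j. z j t"] below[OF that(2)]
      that(2) \<tau>(1) by force
  from is_solution_if_clipped_in_box[OF sol_\<tau> this]
  show ?thesis
    using \<tau> init unfolding stacked_norm_def
    by (intro exI[of _ \<tau>] exI[of _ z] exI[of _ "\<lambda>i. z (n + i)"] exI[of _ "\<lambda>i. z (2 * n + i)"] conjI) auto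
qed

lemma scaled_initial_state:
  fixes \<tau> :: real
  assumes "0 < \<tau>" "\<tau> \<le> 1/3" and u: "\<forall>i<2 * n. 0 \<le> u i \<and> u i \<le> 1"
    and i0: "i0 < 2 * n" "0 < u i0" and z0: "z0 = (\<lambda>j. if j < 2 * n then \<tau> * u j else 0)"
  shows "\<forall>j<3 * n. 0 \<le> z0 j" and "0 < (\<Sum>k<2 * n. u k * z0 k)"
    and "stacked_norm z0 \<le> 3 * real n * \<tau>"
    and "admissible n (\<lambda>i. z0 i) (\<lambda>i. z0 (n + i)) (\<lambda>i. z0 (2 * n + i))"
proof -
  have bounds: "0 \<le> z0 j \<and> z0 j \<le> \<tau>" for j
    using u \<open>0 < \<tau>\<close> by (auto simp: z0 mult_left_le)
  then show "\<forall>j<3 * n. 0 \<le> z0 j" by simp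
  show "stacked_norm z0 \<le> 3 * real n * \<tau>"
    using \<open>0 < \<tau>\<close> bounds by (intro stacked_norm_le) auto
  have "u i0 * z0 i0 \<le> (\<Sum>k<2 * n. u k * z0 k)"
    using u bounds i0 by (intro member_le_sum mult_nonneg_nonneg) auto
  moreover have "0 < u i0 * z0 i0" using i0 \<open>0 < \<tau>\<close> by (simp add: z0)
  ultimately show "0 < (\<Sum>k<2 * n. u k * z0 k)" by linarith
  show "admissible n (\<lambda>i. z0 i) (\<lambda>i. z0 (n + i)) (\<lambda>i. z0 (2 * n + i))"
    unfolding admissible_def
  proof (intro allI impI conjI)
    fix i
    show "0 \<le> z0 i" "0 \<le> z0 (n + i)" "0 \<le> z0 (2 * n + i)" using bounds by auto
    show "z0 i + z0 (n + i) + z0 (2 * n + i) \<le> 1"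
      using bounds[of i] bounds[of "n + i"] bounds[of "2 * n + i"] \<open>\<tau> \<le> 1/3\<close> by linarith
  qed
qed

theorem healthy_unstable_if_spectral_abscissa_pos:
  assumes "0 < spectral_abscissa U"
  shows "healthy_unstable n F N \<alpha> \<beta> \<sigma> \<delta>"
proof -
  have "0 < 2 * n" using n_pos by simp
  obtain u \<mu> where "0 < \<mu>" and u: "\<forall>i<2 * n. 0 \<le> u i \<and> u i \<le> 1" and "\<exists>i<2 * n. 0 < u i"
    and sub: "\<forall>i<2 * n. \<mu> * u i \<le> (\<Sum>j<2 * n. U $$ (j, i) * u j)"
    by (rule metzler_left_subeigenvector[OF Umat_carrier \<open>0 < 2 * n\<close> Umat_offdiag_nonneg assms])
  then obtain i0 where i0: "i0 < 2 * n" "0 < u i0" by auto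
  have u_nonneg: "\<forall>i<2 * n. 0 \<le> u i" using u by auto
  obtain b where b: "0 < b" "b \<le> 1/3" and growth: "\<And>v. \<forall>j<3 * n. 0 \<le> v j \<and> v j \<le> b \<Longrightarrow>
      \<mu> / 4 * (\<Sum>k<2 * n. u k * v k) \<le> (\<Sum>k<2 * n. u k * stacked_rhs v k)"
    using weighted_rhs_growth_near_zero[OF u_nonneg sub \<open>0 < \<mu>\<close>] by blast
  show ?thesis
    unfolding healthy_unstable_def
  proof (intro exI[of _ b] conjI allI impI)
    fix d :: real assume "0 < d"
    define \<tau> where "\<tau> = min b d / (3 * real n + 1)"
    have "0 < \<tau>" using b \<open>0 < d\<close> by (simp add: \<tau>_def)
    have "(3 * real n + 1) * \<tau> = min b d" by (simp add: \<tau>_def)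
    moreover have "0 \<le> 3 * real n * \<tau>" using \<open>0 < \<tau>\<close> by simp
    ultimately have "3 * real n * \<tau> < min b d" and "\<tau> \<le> 1/3"
      using \<open>0 < \<tau>\<close> b(2) min.cobounded1[of b d] unfolding distrib_right by linarith+
    define z0 where "z0 = (\<lambda>j. if j < 2 * n then \<tau> * u j else 0)"
    note z0 = scaled_initial_state[OF \<open>0 < \<tau>\<close> \<open>\<tau> \<le> 1/3\<close> u i0 z0_def]
    have small: "stacked_norm z0 < min b d"
      using z0(3) \<open>3 * real n * \<tau> < min b d\<close> by linarith
    have "0 < \<mu> / 4" "stacked_norm z0 < b" using \<open>0 < \<mu>\<close> small by simp_all
    then have escape: "\<exists>T\<ge>0. \<exists>e x r. is_solution n F N \<alpha> \<beta> \<sigma> \<delta> T e x r \<and>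
        (\<forall>i<n. e i 0 = z0 i \<and> x i 0 = z0 (n + i) \<and> r i 0 = z0 (2 * n + i)) \<and>
        b \<le> state_norm n (\<lambda>i. e i T) (\<lambda>i. x i T) (\<lambda>i. r i T)"
      using escaping_solution[OF b _ u_nonneg growth z0(1,2)] by blast
    have initial_near: "state_norm n (\<lambda>i. z0 i) (\<lambda>i. z0 (n + i)) (\<lambda>i. z0 (2 * n + i)) < d"
      using small unfolding stacked_norm_def by simp
    show "\<exists>e0 x0 r0. admissible n e0 x0 r0 \<and> state_norm n e0 x0 r0 < d \<and>
        (\<exists>T\<ge>0. \<exists>e x r. is_solution n F N \<alpha> \<beta> \<sigma> \<delta> T e x r \<and>
          (\<forall>i<n. e i 0 = e0 i \<and> x i 0 = x0 i \<and> r i 0 = r0 i) \<and>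
          b \<le> state_norm n (\<lambda>i. e i T) (\<lambda>i. x i T) (\<lambda>i. r i T))"
      by (intro exI[of _ "\<lambda>i. z0 i"] exI[of _ "\<lambda>i. z0 (n + i)"] exI[of _ "\<lambda>i. z0 (2 * n + i)"] conjI
          z0(4) initial_near escape)
  qed (rule b(1))
qed

end

theorem corollary1:
  fixes n :: nat and F :: "nat \<Rightarrow> nat \<Rightarrow> real" and N \<alpha> \<beta> \<sigma> \<delta> :: "nat \<Rightarrow> real"
  assumes "n > 0"
    and "\<forall>i<n. N i > 0"
    and "\<forall>i<n. \<forall>j<n. F i j \<ge> 0"
    and "\<forall>i<n. F i i = 0"
    and A1: "\<forall>j<n. (\<Sum>i\<in>{..<n} - {j}. F j i) = (\<Sum>i\<in>{..<n} - {j}. F i j)"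
    and A2: "\<forall>i<n. \<alpha> i > 0 \<and> \<beta> i > 0 \<and> \<sigma> i > 0 \<and> \<delta> i > 0"
    and "spectral_abscissa (Umat n F N \<beta> \<sigma> \<delta>) > 0"
  shows "healthy_unstable n F N \<alpha> \<beta> \<sigma> \<delta>"
proof -
  interpret seirs n F N \<alpha> \<beta> \<sigma> \<delta>
    using assms by unfold_locales auto
  show ?thesis
    using assms(7) by (rule healthy_unstable_if_spectral_abscissa_pos)
qed

end
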